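(* Consider any iteration of the while loop of algorithm Greedy-R, and let $(u,v)$ be the pair chosen in it. Then, with $S$ denoting the current set before $u\otimes v$ is inserted, for every $w\in\widetilde{S}$ we have $$\mathit{ov}(w,u\otimes v)=\mathit{ov}(w,u)\quad\text{and}\quad \mathit{ov}(u\otimes v,w)=\mathit{ov}(v,w).$$
   Context: For strings $x,y$, $\mathit{ov}(x,y)$ is the length of the longest suffix of $x$ that is also a prefix of $y$; $\mathrm{pref}(x,y)$ is $x$ with its suffix of length $\mathit{ov}(x,y)$ removed, and $x\otimes y=\mathrm{pref}(x,y)\,y$. $x^R$ denotes the reversal of $x$. For a set $X$ of strings, $\widetilde{X}=X\cup\{x^R:x\in X\}$. A set $X$ is reverse-factor-free if there are no distinct $x,y\in X$ such that $x$ is a factor of $y$ or of $y^R$. The procedure Make-Reverse-Factor-Free$(X)$ repeatedly removes from the current set a string $x$ for which some other string $y\neq x$ of the current set has $x$ as a factor of $y$ or of $y^R$, until no such string remains. Algorithm Greedy-R$(S)$ on a non-empty finite set of strings: first set $S:=$ Make-Reverse-Factor-Free$(S)$. Then, while $|S|>1$: among all pairs $(u,v)$ with $u,v\in\widetilde{S}$ and $u\notin\{v,v^R\}$, choose one with maximal $\mathit{ov}(u,v)$ (ties broken arbitrarily); set $S:=S\cup\{u\otimes v\}$ and then remove from $S$ all of $u,v,u^R,v^R$ that belong to $S$. Return the only element of $S$. *)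

theory Defs
  imports Main "HOL-Library.Sublist"
begin

text \<open>Strings are lists; factor = contiguous sublist (Sublist.sublist).\<close>

definition ov :: "'a list \<Rightarrow> 'a list \<Rightarrow> nat" where
  "ov x y = Max {k. k \<le> length x \<and> k \<le> length y \<and> drop (length x - k) x = take k y}"

definition pref :: "'a list \<Rightarrow> 'a list \<Rightarrow> 'a list" where
  "pref x y = take (length x - ov x y) x"

definition otimes :: "'a list \<Rightarrow> 'a list \<Rightarrow> 'a list" where
  "otimes x y = pref x y @ y"

definition revclose :: "'a list set \<Rightarrow> 'a list set" where
  "revclose X = X \<union> rev ` X"

definition rff :: "'a list set \<Rightarrow> bool" where
  "rff X \<longleftrightarrow> \<not> (\<exists>x\<in>X. \<exists>y\<in>X. x \<noteq> y \<and> (sublist x y \<or> sublist x (rev y)))"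

definition mrff_step :: "'a list set \<Rightarrow> 'a list set \<Rightarrow> bool" where
  "mrff_step X X' \<longleftrightarrow> (\<exists>x\<in>X. \<exists>y\<in>X. y \<noteq> x \<and> (sublist x y \<or> sublist x (rev y)) \<and> X' = X - {x})"

text \<open>Possible outputs of Make-Reverse-Factor-Free (nondeterministic choices).\<close>
definition mrff_result :: "'a list set \<Rightarrow> 'a list set \<Rightarrow> bool" where
  "mrff_result X Y \<longleftrightarrow> mrff_step\<^sup>*\<^sup>* X Y \<and> \<not> (\<exists>Z. mrff_step Y Z)"

definition greedy_choice :: "'a list set \<Rightarrow> 'a list \<Rightarrow> 'a list \<Rightarrow> bool" where
  "greedy_choice S u v \<longleftrightarrow> u \<in> revclose S \<and> v \<in> revclose S \<and> u \<notin> {v, rev v} \<and>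
     (\<forall>u'\<in>revclose S. \<forall>v'\<in>revclose S. u' \<notin> {v', rev v'} \<longrightarrow> ov u' v' \<le> ov u v)"

definition greedy_step :: "'a list set \<Rightarrow> 'a list set \<Rightarrow> bool" where
  "greedy_step S S' \<longleftrightarrow> card S > 1 \<and> (\<exists>u v. greedy_choice S u v \<and>
     S' = (S \<union> {otimes u v}) - {u, v, rev u, rev v})"

text \<open>S is a current set at the start of some iteration of Greedy-R run on input S0.\<close>
definition greedy_reachable :: "'a list set \<Rightarrow> 'a list set \<Rightarrow> bool" where
  "greedy_reachable S0 S \<longleftrightarrow> finite S0 \<and> S0 \<noteq> {} \<and>
     (\<exists>S1. mrff_result S0 S1 \<and> greedy_step\<^sup>*\<^sup>* S1 S)"

end

theory Submission
  imports Defs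
begin

text \<open>
  Along Greedy-R, the reversal closure of the current set stays factor-free, apart from the
  trivial relation between a string and its reversal. This survives a merge because a factor of
  \<open>u \<otimes> v\<close> that lies inside neither \<open>u\<close> nor \<open>v\<close> overlaps \<open>u\<close> by more than \<open>ov u v\<close>,
  contradicting the greedy choice of \<open>(u, v)\<close>. Given the invariant, no \<open>w\<close> in the closure
  properly contains \<open>u\<close>, so a suffix of \<open>w\<close> that is a prefix of \<open>u \<otimes> v\<close> cannot be longer
  than \<open>u\<close>, whence \<open>ov w (u \<otimes> v) = ov w u\<close>; the other equation is the mirror image.
\<close>

lemma finite_overlap_lengths:
  "finite {k. k \<le> length x \<and> k \<le> length y \<and> drop (length x - k) x = take k y}"
  by (rule finite_subset[of _ "{..length x}"]) auto

lemma ov_overlap: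
  "ov x y \<le> length x \<and> ov x y \<le> length y \<and> drop (length x - ov x y) x = take (ov x y) y"
proof -
  have "ov x y \<in> {k. k \<le> length x \<and> k \<le> length y \<and> drop (length x - k) x = take k y}"
    unfolding ov_def by (rule Max_in[OF finite_overlap_lengths]) auto
  thus ?thesis by simp
qed

lemma ov_greatest:
  "k \<le> length x \<Longrightarrow> k \<le> length y \<Longrightarrow> drop (length x - k) x = take k y \<Longrightarrow> k \<le> ov x y"
  unfolding ov_def by (rule Max_ge[OF finite_overlap_lengths]) auto

lemma ov_rev: "ov (rev y) (rev x) = ov x y"
proof -
  have "drop (length y - k) (rev y) = take k (rev x) \<longleftrightarrow> drop (length x - k) x = take k y"
    if "k \<le> length x" "k \<le> length y" for k
  proof -
    have "rev (drop (length x - k) x) = take k (rev x)"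
      and "rev (take k y) = drop (length y - k) (rev y)"
      using that by (simp_all add: rev_drop rev_take)
    thus ?thesis by (metis rev_rev_ident)
  qed
  hence "{k. k \<le> length (rev y) \<and> k \<le> length (rev x) \<and> drop (length (rev y) - k) (rev y) = take k (rev x)}
       = {k. k \<le> length x \<and> k \<le> length y \<and> drop (length x - k) x = take k y}"
    by auto
  thus ?thesis unfolding ov_def by simp
qed

lemma ov_append_right:
  "ov w (u @ r) = ov w u \<or> (sublist u w \<and> length u < length w)"
proof (cases "ov w (u @ r) \<le> length u")
  case True
  have "drop (length w - ov w (u @ r)) w = take (ov w (u @ r)) u"
    using ov_overlap[of w "u @ r"] True by simp
  hence "ov w (u @ r) \<le> ov w u"
    using True ov_overlap[of w "u @ r"] by (intro ov_greatest) auto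
  moreover have "ov w u \<le> ov w (u @ r)"
    using ov_overlap[of w u] by (intro ov_greatest) auto
  ultimately show ?thesis by simp
next
  case False
  have "drop (length w - ov w (u @ r)) w = u @ take (ov w (u @ r) - length u) r"
    using ov_overlap[of w "u @ r"] False by simp
  hence "sublist u (drop (length w - ov w (u @ r)) w)" by simp
  hence "sublist u w"
    using sublist_drop sublist_order.order_trans by blast
  moreover have "length u < length w" using False ov_overlap[of w "u @ r"] by simp
  ultimately show ?thesis by simp
qed

lemma ov_append_left:
  "ov (r @ v) w = ov v w \<or> (sublist v w \<and> length v < length w)"
proof -
  have "ov (rev w) (rev v @ rev r) = ov (rev w) (rev v) \<or>
        (sublist (rev v) (rev w) \<and> length (rev v) < length (rev w))"
    by (rule ov_append_right)
  thus ?thesis by (simp only: rev_append[symmetric] ov_rev length_rev sublist_rev)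
qed

lemma otimes_eq_take: "otimes u v = take (length u - ov u v) u @ v"
  unfolding otimes_def pref_def by simp

lemma prefix_otimes: "prefix u (otimes u v)"
proof -
  have "u = take (length u - ov u v) u @ take (ov u v) v"
    using ov_overlap[of u v] append_take_drop_id[of "length u - ov u v" u] by simp
  thus ?thesis unfolding otimes_eq_take by (metis prefix_append take_is_prefix)
qed

lemma suffix_otimes: "suffix v (otimes u v)"
  unfolding otimes_eq_take suffix_def by blast
lemma sublist_otimes_cases:
  assumes "sublist a (otimes u v)"
  shows "sublist a u \<or> sublist a v \<or> ov u v < ov u a"
proof -
  define p where "p = take (length u - ov u v) u"
  have lp: "length p = length u - ov u v" using ov_overlap[of u v] unfolding p_def by simp
  obtain r where ur: "otimes u v = u @ r" using prefix_otimes prefixE by metis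
  obtain ps ss where occ: "otimes u v = ps @ a @ ss" using assms unfolding sublist_def by auto
  have pv: "otimes u v = p @ v" by (simp add: otimes_eq_take p_def)
  have u_occ: "u @ r = ps @ a @ ss" using occ ur by simp
  consider "length p \<le> length ps" | "length ps + length a \<le> length u"
    | "length ps < length p" "length u < length ps + length a"
    by linarith
  thus ?thesis
  proof cases
    case 1
    hence "v = drop (length p) ps @ a @ ss" using occ pv by (simp add: append_eq_append_conv_if)
    thus ?thesis by (metis sublist_appendI)
  next
    case 2
    have "u = take (length u) (ps @ a @ ss)" using arg_cong[OF u_occ, of "take (length u)"] by simp
    hence "u = ps @ a @ take (length u - length ps - length a) ss" using 2 by simp
    thus ?thesis by (metis sublist_appendI)
  next
    case 3
    \<comment> \<open>\<open>a\<close> straddles the junction, so the part of \<open>u\<close> from position \<open>length ps\<close> on is a prefix of \<open>a\<close>\<close>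
    define m where "m = length u - length ps"
    have drop_ps: "drop (length ps) u @ r = a @ ss"
      using arg_cong[OF u_occ, of "drop (length ps)"] 3 lp by simp
    have "drop (length u - m) u = take m (drop (length ps) u @ r)"
      using 3 lp by (simp add: m_def)
    also have "\<dots> = take m a"
      using 3 by (simp add: drop_ps m_def)
    finally have "drop (length u - m) u = take m a" .
    hence "m \<le> ov u a" using 3 lp by (intro ov_greatest) (auto simp: m_def)
    moreover have "ov u v < m" using 3 lp ov_overlap[of u v] by (simp add: m_def)
    ultimately show ?thesis by simp
  qed
qed

definition revclose_factor_free :: "'a list set \<Rightarrow> bool" where
  "revclose_factor_free S \<longleftrightarrow>
     (\<forall>a\<in>revclose S. \<forall>b\<in>revclose S. b \<notin> {a, rev a} \<longrightarrow> \<not> sublist a b)"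

lemma mrff_result_rff:
  assumes "mrff_result S0 S"
  shows "rff S"
proof (rule ccontr)
  assume "\<not> rff S"
  then obtain x y where "x \<in> S" "y \<in> S" "y \<noteq> x" "sublist x y \<or> sublist x (rev y)"
    unfolding rff_def by blast
  hence "mrff_step S (S - {x})" unfolding mrff_step_def by blast
  thus False using assms unfolding mrff_result_def by blast
qed

lemma rff_revclose_factor_free:
  assumes "rff S"
  shows "revclose_factor_free S"
  unfolding revclose_factor_free_def
proof (intro ballI impI notI)
  fix a b assume a: "a \<in> revclose S" and b: "b \<in> revclose S"
    and ab: "b \<notin> {a, rev a}" and "sublist a b"
  obtain x where x: "x \<in> S" "a = x \<or> a = rev x" using a unfolding revclose_def by auto
  obtain y where y: "y \<in> S" "b = y \<or> b = rev y" using b unfolding revclose_def by auto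
  have "x \<noteq> y" using x(2) y(2) ab by auto
  moreover have "sublist x y \<or> sublist x (rev y)"
    using \<open>sublist a b\<close> x(2) y(2) by (auto simp: sublist_rev_left)
  ultimately show False using assms x(1) y(1) unfolding rff_def by blast
qed

lemma greedy_choice_no_junction_factor:
  assumes choice: "greedy_choice S u v" and ff: "revclose_factor_free S"
    and a: "a \<in> revclose S" and a_new: "a \<notin> {u, v, rev u, rev v}"
  shows "\<not> sublist a (otimes u v)"
proof
  assume "sublist a (otimes u v)"
  have u: "u \<in> revclose S" and v: "v \<in> revclose S"
    using choice unfolding greedy_choice_def by auto
  have "u \<notin> {a, rev a}" and "v \<notin> {a, rev a}" using a_new by auto
  hence "\<not> sublist a u" and "\<not> sublist a v"
    using ff a u v unfolding revclose_factor_free_def by blast+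
  moreover have "ov u a \<le> ov u v"
    using choice a \<open>u \<notin> {a, rev a}\<close> unfolding greedy_choice_def by blast
  ultimately show False using sublist_otimes_cases[OF \<open>sublist a (otimes u v)\<close>] by simp
qed

lemma greedy_step_revclose_factor_free:
  assumes ff: "revclose_factor_free S" and step: "greedy_step S S'"
  shows "revclose_factor_free S'"
proof -
  obtain u v where choice: "greedy_choice S u v"
    and S': "S' = (S \<union> {otimes u v}) - {u, v, rev u, rev v}"
    using step unfolding greedy_step_def by blast
  define t where "t = otimes u v"
  define R where "R = {u, v, rev u, rev v}"
  have old: "c \<in> revclose S" "rev c \<in> revclose S" "c \<notin> R" "rev c \<notin> R"
    if "c \<in> revclose S'" "c \<notin> {t, rev t}" for c
    using that unfolding S' revclose_def t_def R_def by auto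
  have not_in_t: "\<not> sublist c t" if "c \<in> revclose S" "c \<notin> R" for c
    using greedy_choice_no_junction_factor[OF choice ff that(1)] that(2)
    unfolding R_def t_def by blast
  have u: "u \<in> revclose S" using choice unfolding greedy_choice_def by auto
  have not_over_t: "\<not> sublist t c" if "c \<in> revclose S" "c \<notin> R" for c
  proof
    assume "sublist t c"
    hence "sublist u c"
      using prefix_otimes unfolding t_def by (metis prefix_imp_sublist sublist_order.order_trans)
    thus False using ff u that unfolding revclose_factor_free_def R_def by auto
  qed
  show ?thesis
    unfolding revclose_factor_free_def
  proof (intro ballI impI notI)
    fix a b assume a: "a \<in> revclose S'" and b: "b \<in> revclose S'"
      and ab: "b \<notin> {a, rev a}" and ab_sub: "sublist a b"
    show False
    proof (cases "a \<in> {t, rev t}")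
      case True
      hence "b \<notin> {t, rev t}" using ab by auto
      thus False using True ab_sub old[OF b] not_over_t by (auto simp: sublist_rev_left)
    next
      case False
      show False
      proof (cases "b \<in> {t, rev t}")
        case True
        thus False using False ab_sub old[OF a] not_in_t by (auto simp: sublist_rev_right)
      next
        case b_old: False
        show False using ff ab ab_sub old[OF a False] old[OF b b_old]
          unfolding revclose_factor_free_def by blast
      qed
    qed
  qed
qed

lemma greedy_reachable_revclose_factor_free:
  assumes "greedy_reachable S0 S"
  shows "revclose_factor_free S"
proof -
  obtain S1 where init: "mrff_result S0 S1" and steps: "greedy_step\<^sup>*\<^sup>* S1 S"
    using assms unfolding greedy_reachable_def by blast
  from steps show ?thesis
    by (induction rule: rtranclp_induct)
       (use init in \<open>auto intro: greedy_step_revclose_factor_free rff_revclose_factor_free mrff_result_rff\<close>)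
qed

theorem lemma2:
  fixes S0 S :: "'a list set" and u v w :: "'a list"
  assumes "greedy_reachable S0 S"
    and "card S > 1"
    and "greedy_choice S u v"
    and "w \<in> revclose S"
  shows "ov w (otimes u v) = ov w u \<and> ov (otimes u v) w = ov v w"
proof -
  have ff: "revclose_factor_free S"
    using greedy_reachable_revclose_factor_free[OF assms(1)] .
  have u: "u \<in> revclose S" and v: "v \<in> revclose S"
    using assms(3) unfolding greedy_choice_def by auto
  have no_proper_factor: "\<not> (sublist x w \<and> length x < length w)" if "x \<in> revclose S" for x
  proof
    assume "sublist x w \<and> length x < length w"
    moreover from this have "w \<notin> {x, rev x}" by auto
    ultimately show False using ff that assms(4) unfolding revclose_factor_free_def by blast
  qed
  obtain r where "otimes u v = u @ r" using prefix_otimes prefixE by metis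
  hence "ov w (otimes u v) = ov w u"
    using ov_append_right[of w u r] no_proper_factor[OF u] by simp
  moreover obtain l where "otimes u v = l @ v" using suffix_otimes suffixE by metis
  hence "ov (otimes u v) w = ov v w"
    using ov_append_left[of l v w] no_proper_factor[OF v] by simp
  ultimately show ?thesis ..
qed

end
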